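(* There is an absolute constant $C$ such that for every integer $n\ge 2$ and every $(x_1,\dots,x_n)\in A_n$, $$S_n(x_1,\dots,x_n)\le n^3+Cn^2 .$$
   Context: For an integer $n\ge 2$, $A_n$ is the set of integer vectors $(x_1,\dots,x_n)\in\mathbb{Z}^n$ such that $n\ge x_1\ge x_2\ge\cdots\ge x_n\ge 0$, $\sum_{i=1}^k x_i\le 2n+6k-16$ for every $k\in\{1,\dots,n\}$, and $\sum_{i=1}^n x_i\le 6n-12$. For an integer $m\ge 2$, $S_m:\mathbb{R}^m\to\mathbb{R}$ is defined by $S_m(x_1,\dots,x_m)=\sum_{i=1}^{m-1}\sum_{j=i+1}^{m} x_i x_j^2$. *)

theory Defs
  imports Complex_Main
begin

text \<open>Vectors (x_1,...,x_n) are represented as functions x :: nat => int, using indices 1..n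
  (values outside 1..n are irrelevant).\<close>

definition A_set :: "nat \<Rightarrow> (nat \<Rightarrow> int) set" where
  "A_set n = {x. int n \<ge> x 1
      \<and> (\<forall>i\<in>{1..<n}. x i \<ge> x (Suc i))
      \<and> x n \<ge> 0
      \<and> (\<forall>k\<in>{1..n}. (\<Sum>i=1..k. x i) \<le> 2 * int n + 6 * int k - 16)
      \<and> (\<Sum>i=1..n. x i) \<le> 6 * int n - 12}"

definition S_fun :: "nat \<Rightarrow> (nat \<Rightarrow> real) \<Rightarrow> real" where
  "S_fun m x = (\<Sum>i=1..m-1. \<Sum>j=i+1..m. x i * (x j)^2)"

end

theory Submission
  imports Defs
begin

text \<open>
  Write \<open>P k = x\<^sub>1 + \<dots> + x\<^sub>k\<close>. Adding \<open>x\<^sub>m\<^sub>+\<^sub>1\<close> raises \<open>S\<close> by \<open>x\<^sub>m\<^sub>+\<^sub>1\<^sup>2 P m\<close>, and for a decreasing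
  nonnegative sequence this increment is at most \<open>((P m + x\<^sub>m\<^sub>+\<^sub>1)\<^sup>3 - (P m)\<^sup>3) / 8\<close>; hence
  \<open>8 S\<^sub>m \<le> (P m)\<^sup>3\<close>, which settles bounded \<open>n\<close> since \<open>P n \<le> 6n\<close>.
  For large \<open>n\<close> split at \<open>J = 24\<close>: the head contributes at most \<open>(P J)\<^sup>3/8\<close> and the tail at most
  \<open>P n \<cdot> \<Sum>\<^sub>j\<^sub>>\<^sub>J x\<^sub>j\<^sup>2\<close>. Abel summation against the linear prefix bounds gives
  \<open>\<Sum>\<^sub>j\<^sub>>\<^sub>J x\<^sub>j\<^sup>2 \<le> (2n + 6J - 16 - P J) x\<^sub>J\<^sub>+\<^sub>1 + 6 P n\<close>, and \<open>x\<^sub>J\<^sub>+\<^sub>1 \<le> (2n + 6J - 10)/(J+1)\<close>.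
  The leading terms then combine to at most \<open>(2n + 6J - 16)\<^sup>3/8 = n\<^sup>3 + O(n\<^sup>2)\<close>, because the slack
  \<open>2n + 6J - 16 - P J\<close> lost in the head term outweighs the one gained in the tail once \<open>J \<ge> 24\<close>.
\<close>

lemma S_fun_Suc:
  "S_fun (Suc m) y = S_fun m y + y (Suc m)^2 * (\<Sum>i=1..m. y i)"
proof (cases m)
  case 0
  then show ?thesis by (simp add: S_fun_def)
next
  case (Suc k)
  have "S_fun (Suc m) y = (\<Sum>i=1..m. (\<Sum>j=i+1..m. y i * (y j)^2) + y i * y (Suc m)^2)"
    unfolding S_fun_def by (intro sum.cong) auto
  also have "\<dots> = S_fun m y + y (Suc m)^2 * (\<Sum>i=1..m. y i)"
    by (simp add: Suc S_fun_def sum.distrib sum_distrib_right[symmetric] mult.commute)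
  finally show ?thesis .
qed

locale antitone_nonneg_seq =
  fixes n :: nat and y :: "nat \<Rightarrow> real"
  assumes antitone: "\<And>i k. 1 \<le> i \<Longrightarrow> i \<le> k \<Longrightarrow> k \<le> n \<Longrightarrow> y k \<le> y i"
    and nonneg: "\<And>i. 1 \<le> i \<Longrightarrow> i \<le> n \<Longrightarrow> 0 \<le> y i"
begin

definition psum :: "nat \<Rightarrow> real" where
  "psum k = (\<Sum>i=1..k. y i)"

lemma psum_Suc: "psum (Suc k) = psum k + y (Suc k)"
  by (simp add: psum_def)

lemma psum_2: "psum 2 = y 1 + y 2"
  by (simp add: psum_def numeral_2_eq_2)

lemma sum_tail_eq_psum_diff: "J \<le> m \<Longrightarrow> (\<Sum>j=J+1..m. y j) = psum m - psum J"
  by (induction m rule: dec_induct) (simp_all add: psum_Suc)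

lemma psum_mono: "k \<le> m \<Longrightarrow> m \<le> n \<Longrightarrow> psum k \<le> psum m"
proof (induction m rule: dec_induct)
  case (step m)
  then show ?case using nonneg[of "Suc m"] by (simp add: psum_Suc)
qed simp

lemma psum_nonneg: "k \<le> n \<Longrightarrow> 0 \<le> psum k"
  using psum_mono[of 0 k] by (simp add: psum_def)

lemma mult_le_psum: "1 \<le> k \<Longrightarrow> k \<le> n \<Longrightarrow> real k * y k \<le> psum k"
  using sum_mono[of "{1..k}" "\<lambda>_. y k" y] antitone[of _ k] by (simp add: psum_def)

lemma S_fun_cube_le: "2 \<le> m \<Longrightarrow> m \<le> n \<Longrightarrow> 8 * S_fun m y \<le> psum m ^ 3"
proof (induction m rule: dec_induct)
  case base
  have "S_fun 2 y = y 1 * (y 2)^2"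
    using S_fun_Suc[of 1 y] S_fun_Suc[of 0 y] by (simp add: S_fun_def numeral_2_eq_2)
  moreover have "y 2 \<le> y 1" "0 \<le> y 2" using antitone[of 1 2] nonneg[of 2] base by simp_all
  then have "0 \<le> 4 * (y 2)^2 * (y 1 - y 2) + 6 * y 2 * (y 1 - y 2)^2 + (y 1 - y 2)^3"
    by simp
  ultimately show ?case
    by (simp add: psum_2 power2_eq_square power3_eq_cube algebra_simps)
next
  case (step m)
  define z where "z = y (Suc m)"
  define Q where "Q = psum m"
  have "0 \<le> z" using nonneg[of "Suc m"] step by (simp add: z_def)
  moreover have "2 * z \<le> Q"
    using antitone[of 1 "Suc m"] antitone[of 2 "Suc m"] psum_mono[of 2 m] step
    by (simp add: z_def Q_def psum_2)
  ultimately have "0 \<le> z * Q * (3 * Q - 5 * z) + z^3"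
    by simp
  then have "8 * z^2 * Q \<le> (Q + z)^3 - Q^3"
    by (simp add: power2_eq_square power3_eq_cube algebra_simps)
  moreover have "S_fun (Suc m) y = S_fun m y + z^2 * Q"
    using S_fun_Suc[of m y] by (simp add: z_def Q_def psum_def)
  ultimately show ?case
    using step by (simp add: psum_Suc z_def Q_def)
qed

lemma S_fun_le_head_plus_tail:
  "J \<le> m \<Longrightarrow> m \<le> n \<Longrightarrow> S_fun m y \<le> S_fun J y + psum n * (\<Sum>j=J+1..m. (y j)^2)"
proof (induction m rule: dec_induct)
  case (step m)
  have "y (Suc m)^2 * psum m \<le> psum n * y (Suc m)^2"
    using psum_mono[of m n] step by (simp add: mult.commute mult_right_mono)
  then show ?case
    using S_fun_Suc[of m y] step by (simp add: psum_def distrib_left)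
qed simp

lemma sum_tail_abel_le:
  fixes J :: nat and B c :: real
  defines "d \<equiv> B + c * real J - psum J"
  assumes line: "\<And>k. J < k \<Longrightarrow> k \<le> n \<Longrightarrow> psum k \<le> B + c * real k"
  shows "J + 1 \<le> m \<Longrightarrow> m \<le> n \<Longrightarrow> (\<Sum>j=J+1..m. y j * (y j - c))
           \<le> (y (J+1) - y m) * d + y m * (psum m - psum J - c * (real m - real J))"
proof (induction m rule: dec_induct)
  case base
  then show ?case by (simp add: psum_Suc algebra_simps)
next
  case (step m)
  have "psum m - psum J - c * (real m - real J) \<le> d"
    using line[of m] step by (simp add: d_def algebra_simps)
  moreover have "y (Suc m) \<le> y m" using antitone[of m "Suc m"] step by simp
  ultimately have "0 \<le> (y m - y (Suc m)) * (d - (psum m - psum J - c * (real m - real J)))"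
    by simp
  then show ?case using step by (simp add: psum_Suc algebra_simps)
qed

lemma sum_square_tail_le:
  fixes B c :: real
  assumes "J < n" and line: "\<And>k. J < k \<Longrightarrow> k \<le> n \<Longrightarrow> psum k \<le> B + c * real k"
  shows "(\<Sum>j=J+1..n. (y j)^2) \<le> (B + c * real J - psum J) * y (J+1) + c * (psum n - psum J)"
proof -
  define d where "d = B + c * real J - psum J"
  have "psum n - psum J - c * (real n - real J) \<le> d"
    using line[of n] \<open>J < n\<close> by (simp add: d_def algebra_simps)
  then have "y n * (psum n - psum J - c * (real n - real J)) \<le> y n * d"
    using nonneg[of n] \<open>J < n\<close> by (simp add: mult_left_mono)
  with sum_tail_abel_le[of J B c n, OF line] \<open>J < n\<close>
  have "(\<Sum>j=J+1..n. y j * (y j - c)) \<le> y (J+1) * d"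
    by (simp add: d_def algebra_simps)
  moreover have "(\<Sum>j=J+1..n. (y j)^2) = (\<Sum>j=J+1..n. y j * (y j - c)) + c * (\<Sum>j=J+1..n. y j)"
    by (simp add: sum_distrib_left sum.distrib[symmetric] power2_eq_square algebra_simps)
  ultimately show ?thesis
    using sum_tail_eq_psum_diff[of J n] \<open>J < n\<close> by (simp add: d_def mult.commute)
qed

end

text \<open>The bound for \<open>n \<ge> 25\<close>, with \<open>N = n\<close>, \<open>p = P 24\<close> and \<open>u = x\<^sub>2\<^sub>5\<close>.\<close>

lemma split_estimate_le:
  fixes N p u :: real
  assumes N: "25 \<le> N" and p: "0 \<le> p" "p \<le> 2 * N + 128" and u: "25 * u \<le> 2 * N + 134"
  shows "p^3 / 8 + 6 * N * ((2 * N + 128 - p) * u) + 216 * N^2 \<le> N^3 + 2000 * N^2"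
proof -
  define E where "E = 2 * N + 128"
  define d where "d = E - p"
  have d: "0 \<le> d" "d \<le> E" using p by (simp_all add: d_def E_def)
  have "p^2 * p \<le> E^2 * p"
    using power_mono[OF p(2) p(1), of 2] p(1) by (simp add: E_def mult_right_mono)
  then have head: "p^3 \<le> E^3 - E^2 * d"
    by (simp add: d_def power2_eq_square power3_eq_cube algebra_simps)
  have "25 * u * (6 * N * d) \<le> (2 * N + 134) * (6 * N * d)"
    using u N d by (intro mult_right_mono) auto
  then have tail: "25 * (6 * N * (d * u)) \<le> 12 * (N^2 * d) + 804 * (N * d)"
    by (simp add: power2_eq_square algebra_simps)
  have "4 * N^2 \<le> E^2" using N by (simp add: E_def power2_eq_square algebra_simps)
  then have "4 * (N^2 * d) \<le> E^2 * d" using d(1) by (metis mult.assoc mult_right_mono)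
  moreover have "N * d \<le> N * E" using d N by (simp add: mult_left_mono)
  moreover have "0 \<le> N^2 * d" using d by simp
  moreover have "E^3 = 8*N^3 + 1536*N^2 + 98304*N + 2097152"
    by (simp add: E_def power3_eq_cube power2_eq_square algebra_simps)
  moreover have "N * E = 2 * N^2 + 128 * N" by (simp add: E_def power2_eq_square algebra_simps)
  moreover have "25 * N \<le> N^2" using N by (simp add: power2_eq_square mult_right_mono)
  moreover have "625 \<le> N^2" using N mult_mono[OF N N] by (simp add: power2_eq_square)
  ultimately have "p^3 + 8 * (6 * N * (d * u)) + 1728 * N^2 \<le> 8 * (N^3 + 2000 * N^2)"
    using head tail by (smt (verit))
  then show ?thesis by (simp add: d_def E_def)
qed

locale A_sequence = antitone_nonneg_seq +
  assumes prefix_sum_le: "\<And>k. 1 \<le> k \<Longrightarrow> k \<le> n \<Longrightarrow> (\<Sum>i=1..k. y i) \<le> 2 * real n + 6 * real k - 16"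
    and total_sum_le: "(\<Sum>i=1..n. y i) \<le> 6 * real n - 12"
begin

lemma prefix_le: "1 \<le> k \<Longrightarrow> k \<le> n \<Longrightarrow> psum k \<le> 2 * real n + 6 * real k - 16"
  using prefix_sum_le by (simp add: psum_def)

lemma total_le: "psum n \<le> 6 * real n - 12"
  using total_sum_le by (simp add: psum_def)

lemma S_fun_le_small: "2 \<le> n \<Longrightarrow> n \<le> 24 \<Longrightarrow> S_fun n y \<le> real n ^ 3 + 2000 * real n ^ 2"
proof -
  assume n: "2 \<le> n" "n \<le> 24"
  have "psum n ^ 3 \<le> (6 * real n) ^ 3"
    using total_le psum_nonneg[of n] by (intro power_mono) auto
  then have "S_fun n y \<le> 27 * real n * real n ^ 2"
    using S_fun_cube_le[of n] n by (simp add: power_mult_distrib power2_eq_square power3_eq_cube)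
  also have "\<dots> \<le> 27 * 24 * real n ^ 2" using n by (intro mult_right_mono) auto
  also have "\<dots> \<le> real n ^ 3 + 2000 * real n ^ 2" by simp
  finally show ?thesis .
qed

lemma S_fun_le_large: "25 \<le> n \<Longrightarrow> S_fun n y \<le> real n ^ 3 + 2000 * real n ^ 2"
proof -
  assume n: "25 \<le> n"
  define N where "N = real n"
  define p where "p = psum 24"
  define Q where "Q = (\<Sum>j=24+1..n. (y j)^2)"
  have p: "0 \<le> p" "p \<le> 2 * N + 128" "p \<le> psum n"
    using psum_nonneg[of 24] prefix_le[of 24] psum_mono[of 24 n] n by (simp_all add: p_def N_def)
  have Pn: "psum n \<le> 6 * N" using total_le by (simp add: N_def)
  define D where "D = (2 * N + 128 - p) * y 25"
  have "psum k \<le> (2 * N - 16) + 6 * real k" if "24 < k" "k \<le> n" for k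
    using prefix_le[of k] that by (simp add: N_def)
  from sum_square_tail_le[of 24 "2 * N - 16" 6, OF _ this] n
  have "Q \<le> D + 6 * (psum n - p)"
    by (simp add: Q_def p_def D_def algebra_simps)
  also have "6 * (psum n - p) \<le> 36 * N" using Pn p by simp
  finally have Q_le: "Q \<le> D + 36 * N" by simp
  have "0 \<le> Q" unfolding Q_def by (rule sum_nonneg) simp
  with Pn have "psum n * Q \<le> 6 * N * Q" by (rule mult_right_mono)
  also have "\<dots> \<le> 6 * N * (D + 36 * N)" using Q_le by (intro mult_left_mono) (simp_all add: N_def)
  also have "\<dots> = 6 * N * D + 216 * N^2" by (simp add: power2_eq_square algebra_simps)
  finally have tail: "psum n * Q \<le> 6 * N * D + 216 * N^2" .
  have "S_fun n y \<le> S_fun 24 y + psum n * Q"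
    using S_fun_le_head_plus_tail[of 24 n] n by (simp add: Q_def)
  moreover have "8 * S_fun 24 y \<le> p^3" using S_fun_cube_le[of 24] n by (simp add: p_def)
  moreover have "25 * y 25 \<le> 2 * N + 134"
    using mult_le_psum[of 25] prefix_le[of 25] n by (simp add: N_def)
  then have "p^3 / 8 + 6 * N * D + 216 * N^2 \<le> N^3 + 2000 * N^2"
    using split_estimate_le[of N p "y 25"] n p by (simp add: N_def D_def)
  ultimately have "S_fun n y \<le> N^3 + 2000 * N^2"
    using tail by linarith
  then show ?thesis by (simp add: N_def)
qed

lemma S_fun_le: "2 \<le> n \<Longrightarrow> S_fun n y \<le> real n ^ 3 + 2000 * real n ^ 2"
  using S_fun_le_small S_fun_le_large by (cases "n \<le> 24") auto

end

lemma A_set_antitone: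
  assumes "x \<in> A_set n" "1 \<le> i" "i \<le> k" "k \<le> n"
  shows "x k \<le> x i"
  using assms(3,4)
proof (induction k rule: dec_induct)
  case (step k)
  then have "x (Suc k) \<le> x k" using assms(1,2) by (auto simp: A_set_def)
  then show ?case using step by simp
qed simp

lemma A_set_A_sequence:
  assumes "x \<in> A_set n"
  shows "A_sequence n (\<lambda>i. real_of_int (x i))"
proof unfold_locales
  fix i k :: nat assume "1 \<le> i" "i \<le> k" "k \<le> n"
  then show "real_of_int (x k) \<le> real_of_int (x i)" using A_set_antitone[OF assms] by simp
next
  fix i :: nat assume "1 \<le> i" "i \<le> n"
  then show "0 \<le> real_of_int (x i)"
    using A_set_antitone[OF assms, of i n] assms by (simp add: A_set_def)
next
  fix k :: nat assume "1 \<le> k" "k \<le> n"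
  then have "(\<Sum>i=1..k. x i) \<le> 2 * int n + 6 * int k - 16" using assms by (auto simp: A_set_def)
  then have "real_of_int (\<Sum>i=1..k. x i) \<le> real_of_int (2 * int n + 6 * int k - 16)"
    by (simp only: of_int_le_iff)
  then show "(\<Sum>i=1..k. real_of_int (x i)) \<le> 2 * real n + 6 * real k - 16"
    by simp
next
  have "real_of_int (\<Sum>i=1..n. x i) \<le> real_of_int (6 * int n - 12)"
    using assms by (simp only: of_int_le_iff A_set_def mem_Collect_eq)
  then show "(\<Sum>i=1..n. real_of_int (x i)) \<le> 6 * real n - 12"
    by simp
qed

theorem theorem5:
  shows "\<exists>C::real. \<forall>n::nat. \<forall>x. n \<ge> 2 \<longrightarrow> x \<in> A_set n \<longrightarrow>
           S_fun n (\<lambda>i. real_of_int (x i)) \<le> real n ^ 3 + C * real n ^ 2"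
  using A_sequence.S_fun_le[OF A_set_A_sequence] by blast

end
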